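(* Let $(X,x_0)$ be a pointed space, $n\geq1$, and let $\varphi:\mathcal{H}_n(X,x_0)\to\prod_{i\in\mathbb{N}}\pi_n(X,x_0)$ be the homomorphism $\varphi([f])=([f|_{S^n_1}],[f|_{S^n_2}],\dots)$. Then $\operatorname{Im}(\varphi)=L_n(X,x_0)$. In particular, $L_n(X,x_0)$ is a subgroup of $\prod_{i\in\mathbb{N}}\pi_n(X,x_0)$.
   Context: For $n\geq1$, the $n$-dimensional Hawaiian earring is $\mathbb{H}^n=\{(r_0,\dots,r_n)\in\mathbb{R}^{n+1} : (r_0-1/k)^2+\sum_{i=1}^n r_i^2=(1/k)^2 \text{ for some } k\in\mathbb{N}\}$ with base point $\theta=(0,\dots,0)$; $S^n_k$ denotes the $n$-sphere of radius $1/k$ in it, based at $\theta$. The $n$-Hawaiian group $\mathcal{H}_n(X,x_0)$ is the set of pointed homotopy classes (rel $\{\theta\}$) of continuous maps $f:(\mathbb{H}^n,\theta)\to(X,x_0)$, with group operation $[f][g]=[f\ast g]$, where $(f\ast g)|_{S^n_k}$ is the usual concatenation (as in $\pi_n$) of $f|_{S^n_k}$ and $g|_{S^n_k}$ for each $k$. A family of maps $\{f_i:(Y,y)\to(X,x_0)\}$ is null-convergent if for each open set $U\ni x_0$, $\operatorname{Im}(f_i)\subseteq U$ for all but finitely many $i$. $L_n(X,x_0)$ is the subset of $\prod_{i\in\mathbb{N}}\pi_n(X,x_0)$ consisting of all sequences $([f_i])_{i}$ of homotopy classes with representatives $f_i$ such that $\{f_i\}$ is null-convergent. *)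

theory Defs
  imports "HOL-Analysis.Analysis"
begin

text \<open>Points of R^(n+1) are functions nat => real vanishing at indices > n
  (the library's Euclidean_space (Suc n)); coordinate 0 is r_0.\<close>

definition sph_set :: "nat \<Rightarrow> nat \<Rightarrow> (nat \<Rightarrow> real) set" where
  "sph_set n k = {r \<in> topspace (Euclidean_space (Suc n)).
      (r 0 - 1 / real k)\<^sup>2 + (\<Sum>i\<in>{1..n}. (r i)\<^sup>2) = (1 / real k)\<^sup>2}"

definition sph :: "nat \<Rightarrow> nat \<Rightarrow> (nat \<Rightarrow> real) topology" where
  "sph n k = subtopology (Euclidean_space (Suc n)) (sph_set n k)"

definition hawaiian :: "nat \<Rightarrow> (nat \<Rightarrow> real) topology" where
  "hawaiian n = subtopology (Euclidean_space (Suc n)) (\<Union>k\<in>{1..}. sph_set n k)"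

definition theta :: "nat \<Rightarrow> real" where
  "theta = (\<lambda>i. 0)"

definition based_class :: "(nat \<Rightarrow> real) topology \<Rightarrow> 'a topology \<Rightarrow> 'a \<Rightarrow> ((nat \<Rightarrow> real) \<Rightarrow> 'a)
    \<Rightarrow> ((nat \<Rightarrow> real) \<Rightarrow> 'a) set" where
  "based_class Y X x0 f = {g. continuous_map Y X g \<and> g theta = x0 \<and>
      homotopic_with (\<lambda>h. h theta = x0) Y X f g}"

text \<open>pi_n(X,x0), modelled as pointed homotopy classes of based maps from the
  standard sphere S^n_1 (radius 1, based at theta).\<close>
definition pi_n :: "nat \<Rightarrow> 'a topology \<Rightarrow> 'a \<Rightarrow> ((nat \<Rightarrow> real) \<Rightarrow> 'a) set set" where
  "pi_n n X x0 = {based_class (sph n 1) X x0 g | g.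
      continuous_map (sph n 1) X g \<and> g theta = x0}"

definition hawaiian_group :: "nat \<Rightarrow> 'a topology \<Rightarrow> 'a \<Rightarrow> ((nat \<Rightarrow> real) \<Rightarrow> 'a) set set" where
  "hawaiian_group n X x0 = {based_class (hawaiian n) X x0 f | f.
      continuous_map (hawaiian n) X f \<and> f theta = x0}"

text \<open>The canonical identification S^n_1 -> S^n_k, x |-> x/k (fixes theta).\<close>
definition shrink :: "nat \<Rightarrow> (nat \<Rightarrow> real) \<Rightarrow> (nat \<Rightarrow> real)" where
  "shrink k x = (\<lambda>i. x i / real k)"

definition restr_class :: "nat \<Rightarrow> 'a topology \<Rightarrow> 'a \<Rightarrow> nat \<Rightarrow> ((nat \<Rightarrow> real) \<Rightarrow> 'a)
    \<Rightarrow> ((nat \<Rightarrow> real) \<Rightarrow> 'a) set" where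
  "restr_class n X x0 k f = based_class (sph n 1) X x0 (f \<circ> shrink k)"

text \<open>phi([f]) = ([f|S^n_1], [f|S^n_2], ...); sequence index i corresponds to S^n_(i+1).\<close>
definition phi :: "nat \<Rightarrow> 'a topology \<Rightarrow> 'a \<Rightarrow> ((nat \<Rightarrow> real) \<Rightarrow> 'a) set
    \<Rightarrow> (nat \<Rightarrow> ((nat \<Rightarrow> real) \<Rightarrow> 'a) set)" where
  "phi n X x0 F = (let f = (SOME f. f \<in> F) in (\<lambda>i. restr_class n X x0 (Suc i) f))"

definition null_convergent :: "(nat \<Rightarrow> real) topology \<Rightarrow> 'a topology \<Rightarrow> 'a
    \<Rightarrow> (nat \<Rightarrow> (nat \<Rightarrow> real) \<Rightarrow> 'a) \<Rightarrow> bool" where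
  "null_convergent Y X x0 fs \<longleftrightarrow>
     (\<forall>U. openin X U \<and> x0 \<in> U \<longrightarrow> finite {i. \<not> (fs i ` topspace Y \<subseteq> U)})"

definition L_n :: "nat \<Rightarrow> 'a topology \<Rightarrow> 'a \<Rightarrow> (nat \<Rightarrow> ((nat \<Rightarrow> real) \<Rightarrow> 'a) set) set" where
  "L_n n X x0 = {s. \<exists>fs. (\<forall>i. continuous_map (sph n 1) X (fs i) \<and> fs i theta = x0 \<and>
       s i = based_class (sph n 1) X x0 (fs i)) \<and> null_convergent (sph n 1) X x0 fs}"

end

theory Submission
  imports Defs
begin

text \<open>A based map on the Hawaiian earring amounts to a sequence of based maps on the
  spheres \<open>S^n_k\<close>, each read on \<open>S^n_1\<close> through the dilation \<open>x \<mapsto> x/k\<close>.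
  The restrictions of a continuous map are null-convergent because the spheres shrink to
  \<open>theta\<close>. Conversely a null-convergent sequence glues to a continuous map: near \<open>theta\<close>
  all but finitely many spheres land in a given neighbourhood of \<open>x0\<close>, and a point other
  than \<open>theta\<close> has a neighbourhood (a half-space \<open>r_0 > c\<close>) meeting only finitely many of
  the spheres, each of which is closed. As \<open>phi\<close> only depends on the homotopy class of the
  chosen representative, its image is exactly \<open>L_n\<close>.\<close>

definition hawaiian_set :: "nat \<Rightarrow> (nat \<Rightarrow> real) set" where
  "hawaiian_set n = (\<Union>k\<in>{1..}. sph_set n k)"

definition stretch :: "nat \<Rightarrow> (nat \<Rightarrow> real) \<Rightarrow> (nat \<Rightarrow> real)" where
  "stretch k y = (\<lambda>i. real k * y i)"

lemma sph_set_iff: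
  "y \<in> sph_set n k \<longleftrightarrow> (\<forall>i\<ge>Suc n. y i = 0) \<and>
     (y 0 - 1 / real k)\<^sup>2 + (\<Sum>i\<in>{1..n}. (y i)\<^sup>2) = (1 / real k)\<^sup>2"
  unfolding sph_set_def topspace_Euclidean_space by auto

lemma theta_in_sph_set: "theta \<in> sph_set n k"
  unfolding sph_set_iff theta_def by simp

lemma theta_in_hawaiian_set: "theta \<in> hawaiian_set n"
  unfolding hawaiian_set_def using theta_in_sph_set by blast

lemma sph_set_subset_hawaiian_set: "k \<ge> 1 \<Longrightarrow> sph_set n k \<subseteq> hawaiian_set n"
  unfolding hawaiian_set_def by auto

lemma shrink_theta: "shrink k theta = theta"
  by (simp add: shrink_def theta_def)

lemma stretch_shrink: "k \<ge> 1 \<Longrightarrow> stretch k (shrink k x) = x"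
  by (simp add: stretch_def shrink_def)

lemma shrink_in_sph_set:
  assumes "k \<ge> 1" "x \<in> sph_set n 1"
  shows "shrink k x \<in> sph_set n k"
proof -
  have k: "real k > 0" using assms by simp
  have e: "(x 0 - 1)\<^sup>2 + (\<Sum>i\<in>{1..n}. (x i)\<^sup>2) = 1" and z: "\<forall>i\<ge>Suc n. x i = 0"
    using assms(2) unfolding sph_set_iff by auto
  have "(x 0 / real k - 1 / real k)\<^sup>2 + (\<Sum>i\<in>{1..n}. (x i / real k)\<^sup>2)
      = ((x 0 - 1)\<^sup>2 + (\<Sum>i\<in>{1..n}. (x i)\<^sup>2)) / (real k)\<^sup>2"
    using k by (simp add: power_divide diff_divide_distrib[symmetric] sum_divide_distrib add_divide_distrib)
  also have "\<dots> = (1 / real k)\<^sup>2" using e by (simp add: power_divide)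
  finally show ?thesis unfolding sph_set_iff shrink_def using z by simp
qed

lemma stretch_in_sph_set:
  assumes "k \<ge> 1" "y \<in> sph_set n k"
  shows "stretch k y \<in> sph_set n 1"
proof -
  have k: "real k > 0" using assms by simp
  have e: "(y 0 - 1 / real k)\<^sup>2 + (\<Sum>i\<in>{1..n}. (y i)\<^sup>2) = (1 / real k)\<^sup>2"
    and z: "\<forall>i\<ge>Suc n. y i = 0"
    using assms(2) unfolding sph_set_iff by auto
  have "(real k * y 0 - 1)\<^sup>2 + (\<Sum>i\<in>{1..n}. (real k * y i)\<^sup>2)
      = (real k)\<^sup>2 * ((y 0 - 1 / real k)\<^sup>2 + (\<Sum>i\<in>{1..n}. (y i)\<^sup>2))"
    using k by (simp add: power_mult_distrib sum_distrib_left algebra_simps power2_eq_square)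
  also have "\<dots> = 1" using e k by (simp add: power_divide)
  finally show ?thesis unfolding sph_set_iff stretch_def using z by simp
qed

lemma sph_set_coord_bounds:
  assumes "k \<ge> 1" "y \<in> sph_set n k"
  shows "0 \<le> y 0" and "\<bar>y i\<bar> \<le> 2 / real k"
proof -
  have k: "real k > 0" using assms by simp
  have e: "(y 0 - 1 / real k)\<^sup>2 + (\<Sum>i\<in>{1..n}. (y i)\<^sup>2) = (1 / real k)\<^sup>2"
    and z: "\<forall>i\<ge>Suc n. y i = 0"
    using assms(2) unfolding sph_set_iff by auto
  have sq_bound: "\<bar>t\<bar> \<le> 1 / real k" if "t\<^sup>2 \<le> (1 / real k)\<^sup>2" for t
    using power2_le_imp_le[of "\<bar>t\<bar>" "1 / real k"] that k by simp
  have "(\<Sum>i\<in>{1..n}. (y i)\<^sup>2) \<ge> 0" by (simp add: sum_nonneg)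
  then have "(y 0 - 1 / real k)\<^sup>2 \<le> (1 / real k)\<^sup>2" using e by linarith
  then have "\<bar>y 0 - 1 / real k\<bar> \<le> 1 / real k" by (rule sq_bound)
  then have y0: "0 \<le> y 0" "y 0 \<le> 2 / real k" by (auto simp: abs_le_iff)
  then show "0 \<le> y 0" by simp
  consider "i = 0" | "i \<in> {1..n}" | "i \<ge> Suc n" by fastforce
  then show "\<bar>y i\<bar> \<le> 2 / real k"
  proof cases
    case 1 then show ?thesis using y0 by simp
  next
    case 2
    have "(y i)\<^sup>2 \<le> (\<Sum>i\<in>{1..n}. (y i)\<^sup>2)" using 2 by (intro member_le_sum) auto
    moreover have "0 \<le> (y 0 - 1 / real k)\<^sup>2" by simp
    ultimately have "(y i)\<^sup>2 \<le> (1 / real k)\<^sup>2" using e by linarith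
    then have "\<bar>y i\<bar> \<le> 1 / real k" by (rule sq_bound)
    also have "\<dots> \<le> 2 / real k" using k by (simp add: divide_right_mono)
    finally show ?thesis .
  next
    case 3 then show ?thesis using z k by simp
  qed
qed

lemma sph_set_coord0_pos:
  assumes "k \<ge> 1" "y \<in> sph_set n k" "y \<noteq> theta"
  shows "y 0 > 0"
proof (rule ccontr)
  assume "\<not> y 0 > 0"
  then have y0: "y 0 = 0" using sph_set_coord_bounds(1)[OF assms(1,2)] by simp
  have e: "(y 0 - 1 / real k)\<^sup>2 + (\<Sum>i\<in>{1..n}. (y i)\<^sup>2) = (1 / real k)\<^sup>2"
    and z: "\<forall>i\<ge>Suc n. y i = 0"
    using assms(2) unfolding sph_set_iff by auto
  have "(\<Sum>i\<in>{1..n}. (y i)\<^sup>2) = 0" using e y0 by (simp add: power2_eq_square)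
  then have "\<forall>i\<in>{1..n}. y i = 0" by (subst (asm) sum_nonneg_eq_0_iff) auto
  then have "y i = 0" for i
    using y0 z by (cases "i = 0"; cases "i \<le> n") auto
  then have "y = theta" unfolding theta_def by auto
  with assms(3) show False by simp
qed

lemma sph_set_radius_unique:
  assumes "j \<ge> 1" "k \<ge> 1" "y \<in> sph_set n j" "y \<in> sph_set n k" "y \<noteq> theta"
  shows "j = k"
proof -
  have "(y 0 - 1 / real j)\<^sup>2 + (\<Sum>i\<in>{1..n}. (y i)\<^sup>2) = (1 / real j)\<^sup>2"
    and "(y 0 - 1 / real k)\<^sup>2 + (\<Sum>i\<in>{1..n}. (y i)\<^sup>2) = (1 / real k)\<^sup>2"
    using assms(3,4) unfolding sph_set_iff by auto
  then have "y 0 = 0 \<or> j = k" by (simp add: power2_diff algebra_simps)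
  moreover have "y 0 > 0" using sph_set_coord0_pos assms by blast
  ultimately show ?thesis by auto
qed

lemma finite_sph_set_meeting_halfspace:
  assumes "c > 0"
  shows "finite {k. k \<ge> 1 \<and> (\<exists>y\<in>sph_set n k. c < y 0)}"
proof -
  have "k \<le> nat \<lfloor>2 / c\<rfloor>" if k: "k \<ge> 1" and y: "y \<in> sph_set n k" "c < y 0" for k y
  proof -
    have "y 0 \<le> 2 / real k" using sph_set_coord_bounds(2)[OF k y(1), of 0] by simp
    then have "y 0 * real k \<le> 2" using k by (simp add: field_simps)
    moreover have "c * real k < y 0 * real k" using y(2) k by (intro mult_strict_right_mono) auto
    ultimately have "c * real k < 2" by linarith
    then have "real k \<le> 2 / c" using assms by (simp add: field_simps)
    then show ?thesis by (rule le_nat_floor)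
  qed
  then have "{k. k \<ge> 1 \<and> (\<exists>y\<in>sph_set n k. c < y 0)} \<subseteq> {..nat \<lfloor>2 / c\<rfloor>}"
    by blast
  then show ?thesis by (rule finite_subset) simp
qed

lemma Euclidean_space_eq_top_of_set: "Euclidean_space m = top_of_set {x. \<forall>i\<ge>m. x i = 0}"
  by (simp add: Euclidean_space_def euclidean_product_topology)

lemma sph_set_subset_topspace: "sph_set n k \<subseteq> topspace (Euclidean_space (Suc n))"
  unfolding sph_set_def by auto

lemma sph_eq_top_of_set: "sph n k = top_of_set (sph_set n k)"
  unfolding sph_def Euclidean_space_eq_top_of_set subtopology_subtopology
  using sph_set_subset_topspace[of n k] by (simp add: topspace_Euclidean_space Int_absorb1)

lemma hawaiian_eq_top_of_set: "hawaiian n = top_of_set (hawaiian_set n)"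
  unfolding hawaiian_def Euclidean_space_eq_top_of_set subtopology_subtopology hawaiian_set_def
  using sph_set_subset_topspace[of n]
  by (simp add: topspace_Euclidean_space Int_absorb1 UN_subset_iff)

lemma continuous_on_coordinate: "continuous_on S (\<lambda>x::nat\<Rightarrow>real. x i)"
  by (rule continuous_on_subset[OF continuous_on_product_coordinates]) simp

lemma closed_sph_set: "closed (sph_set n k)"
proof -
  have "sph_set n k = topspace (Euclidean_space (Suc n)) \<inter>
     {r. (r 0 - 1 / real k)\<^sup>2 + (\<Sum>i\<in>{1..n}. (r i)\<^sup>2) = (\<lambda>r. (1 / real k)\<^sup>2) r}"
    unfolding sph_set_def by auto
  moreover have "closed (topspace (Euclidean_space (Suc n)))"
    by (rule closedin_Euclidean_imp_closed[OF closedin_topspace])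
  moreover have "closed {r::nat\<Rightarrow>real.
      (r 0 - 1 / real k)\<^sup>2 + (\<Sum>i\<in>{1..n}. (r i)\<^sup>2) = (\<lambda>r. (1 / real k)\<^sup>2) r}"
    by (intro closed_Collect_eq continuous_intros continuous_on_coordinate)
  ultimately show ?thesis by auto
qed

lemma closedin_sph_set_hawaiian_set:
  "k \<ge> 1 \<Longrightarrow> closedin (top_of_set (hawaiian_set n)) (sph_set n k)"
  by (rule closed_subset[OF sph_set_subset_hawaiian_set closed_sph_set])

lemma continuous_map_shrink:
  assumes "k \<ge> 1"
  shows "continuous_map (sph n 1) (hawaiian n) (shrink k)"
proof -
  have "continuous_on (sph_set n 1) (shrink k)"
    unfolding shrink_def
    by (intro continuous_on_coordinatewise_then_product continuous_intros continuous_on_coordinate)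
       (use assms in auto)
  moreover have "shrink k \<in> sph_set n 1 \<rightarrow> hawaiian_set n"
    using shrink_in_sph_set sph_set_subset_hawaiian_set assms by blast
  ultimately show ?thesis unfolding sph_eq_top_of_set hawaiian_eq_top_of_set by simp
qed

lemma continuous_map_stretch:
  assumes "k \<ge> 1"
  shows "continuous_map (top_of_set (sph_set n k)) (sph n 1) (stretch k)"
proof -
  have "continuous_on (sph_set n k) (stretch k)"
    unfolding stretch_def
    by (intro continuous_on_coordinatewise_then_product continuous_intros continuous_on_coordinate)
  moreover have "stretch k \<in> sph_set n k \<rightarrow> sph_set n 1"
    using stretch_in_sph_set[OF assms] by blast
  ultimately show ?thesis unfolding sph_eq_top_of_set by simp
qed

text \<open>In the product metric on \<open>nat \<Rightarrow> real\<close> the first \<open>N\<close> coordinates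
  contribute at most twice their maximal distance and the remaining ones at most
  \<open>(1/2)^N\<close>.\<close>
lemma sph_set_subset_ball:
  assumes "e > 0"
  obtains K where "K \<ge> 1" "\<And>k. k \<ge> K \<Longrightarrow> sph_set n k \<subseteq> ball theta e"
proof -
  obtain N where N: "(1/2::real)^N < e/2"
    using real_arch_pow_inv[of "e/2" "1/2::real"] assms by auto
  obtain K0 :: nat where K0: "real K0 > 8 / e" using reals_Archimedean2 by blast
  define K where "K = Suc K0"
  have K: "real K > 8 / e" "K \<ge> 1" using K0 unfolding K_def by simp_all
  have Kpos: "real K > 0" using K by simp
  have small: "4 / real K < e / 2" using K assms Kpos by (simp add: field_simps)
  have "y \<in> ball theta e" if k: "k \<ge> K" and y: "y \<in> sph_set n k" for k y
  proof -
    have "2 / real k \<le> 2 / real K" using k Kpos by (simp add: frac_le)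
    then have "\<forall>m. dist (y (from_nat m)) (theta (from_nat m)) \<le> 2 / real K"
      using sph_set_coord_bounds(2)[of k y] k K y
      by (auto simp: dist_real_def theta_def intro: order_trans)
    then have "Max {dist (y (from_nat m)) (theta (from_nat m)) |m. m \<le> N} \<le> 2 / real K"
      by (intro Max.boundedI) auto
    then have "dist y theta < e"
      using dist_fun_le_dist_first_terms[of y theta N] N small by linarith
    then show ?thesis by (simp add: dist_commute)
  qed
  then show ?thesis using that K by blast
qed

lemma based_class_eqI:
  assumes "homotopic_with (\<lambda>h. h theta = x0) Y X f g"
  shows "based_class Y X x0 f = based_class Y X x0 g"
  using assms unfolding based_class_def
  by (auto intro: homotopic_with_trans homotopic_with_symD)

lemma based_class_cong:
  assumes "continuous_map Y X f" "f theta = x0" "g theta = x0"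
    and "\<And>x. x \<in> topspace Y \<Longrightarrow> f x = g x"
  shows "based_class Y X x0 f = based_class Y X x0 g"
  using assms by (intro based_class_eqI homotopic_with_equal)

lemma phi_based_class:
  assumes "continuous_map (hawaiian n) X f" "f theta = x0"
  shows "phi n X x0 (based_class (hawaiian n) X x0 f) =
     (\<lambda>i. based_class (sph n 1) X x0 (f \<circ> shrink (Suc i)))"
proof -
  define g where "g = (SOME g. g \<in> based_class (hawaiian n) X x0 f)"
  have "f \<in> based_class (hawaiian n) X x0 f"
    using assms unfolding based_class_def by simp
  then have "g \<in> based_class (hawaiian n) X x0 f"
    unfolding g_def by (rule someI[where P = "\<lambda>g. g \<in> based_class (hawaiian n) X x0 f"])
  then have "homotopic_with (\<lambda>h. h theta = x0) (hawaiian n) X f g"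
    unfolding based_class_def by blast
  then have "homotopic_with (\<lambda>h. h theta = x0) (sph n 1) X
      (f \<circ> shrink (Suc i)) (g \<circ> shrink (Suc i))" for i
    by (rule homotopic_with_compose_continuous_map_right[OF _ continuous_map_shrink])
       (auto simp: shrink_theta)
  then show ?thesis
    unfolding phi_def restr_class_def Let_def g_def[symmetric]
    by (auto intro!: ext based_class_eqI[symmetric])
qed

lemma null_convergent_restrictions:
  assumes f: "continuous_map (hawaiian n) X f" "f theta = x0"
  shows "null_convergent (sph n 1) X x0 (\<lambda>i. f \<circ> shrink (Suc i))"
  unfolding null_convergent_def
proof (intro allI impI)
  fix U assume U: "openin X U \<and> x0 \<in> U"
  have "openin (top_of_set (hawaiian_set n)) {x \<in> hawaiian_set n. f x \<in> U}"
    using openin_continuous_map_preimage[OF f(1)] U unfolding hawaiian_eq_top_of_set by force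
  then obtain e where e: "e > 0" "\<And>y. y \<in> hawaiian_set n \<Longrightarrow> dist y theta < e \<Longrightarrow> f y \<in> U"
    using U f(2) theta_in_hawaiian_set unfolding openin_euclidean_subtopology_iff by blast
  obtain K where K: "K \<ge> 1" "\<And>k. k \<ge> K \<Longrightarrow> sph_set n k \<subseteq> ball theta e"
    using sph_set_subset_ball[OF e(1)] by blast
  have "(f \<circ> shrink (Suc i)) ` topspace (sph n 1) \<subseteq> U" if "i \<ge> K" for i
  proof clarify
    fix x assume "x \<in> topspace (sph n 1)"
    then have y: "shrink (Suc i) x \<in> sph_set n (Suc i)"
      by (intro shrink_in_sph_set) (auto simp: sph_eq_top_of_set)
    then have "dist (shrink (Suc i) x) theta < e"
      using K(2)[of "Suc i"] that by (auto simp: dist_commute)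
    then show "(f \<circ> shrink (Suc i)) x \<in> U"
      using y sph_set_subset_hawaiian_set[of "Suc i" n] e(2) by auto
  qed
  then have "{i. \<not> ((f \<circ> shrink (Suc i)) ` topspace (sph n 1) \<subseteq> U)} \<subseteq> {..<K}"
    using not_less by blast
  then show "finite {i. \<not> ((f \<circ> shrink (Suc i)) ` topspace (sph n 1) \<subseteq> U)}"
    using finite_subset by blast
qed

lemma closedin_sph_set_preimage_compl:
  assumes cont: "continuous_map (top_of_set (sph_set n k)) X f" and "k \<ge> 1" "openin X U"
  shows "closedin (top_of_set (hawaiian_set n)) {y \<in> sph_set n k. f y \<notin> U}"
proof -
  have "closedin (top_of_set (sph_set n k)) {y \<in> sph_set n k. f y \<in> topspace X - U}"
    using closedin_continuous_map_preimage[OF cont, of "topspace X - U"] assms(3) by auto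
  moreover have "{y \<in> sph_set n k. f y \<in> topspace X - U} = {y \<in> sph_set n k. f y \<notin> U}"
    using continuous_map_image_subset_topspace[OF cont] by auto
  ultimately show ?thesis using closedin_trans closedin_sph_set_hawaiian_set[OF assms(2)] by metis
qed

lemma hawaiian_preimage_neighbourhood:
  assumes cont: "\<And>k. k \<ge> 1 \<Longrightarrow> continuous_map (top_of_set (sph_set n k)) X f"
    and U: "openin X U"
    and W: "openin (top_of_set (hawaiian_set n)) W" "p \<in> W" "f p \<in> U"
    and J: "finite J" "\<And>k. k \<ge> 1 \<Longrightarrow> k \<notin> J \<Longrightarrow> W \<inter> sph_set n k \<subseteq> {y. f y \<in> U}"
  shows "\<exists>T. openin (top_of_set (hawaiian_set n)) T \<and> p \<in> T \<and> T \<subseteq> {y \<in> hawaiian_set n. f y \<in> U}"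
proof (intro exI conjI)
  let ?T = "W - (\<Union>k\<in>{k\<in>J. k \<ge> 1}. {y \<in> sph_set n k. f y \<notin> U})"
  show "openin (top_of_set (hawaiian_set n)) ?T"
    using W(1) J(1) closedin_sph_set_preimage_compl[OF cont _ U]
    by (intro openin_diff closedin_Union) auto
  show "p \<in> ?T" using W by auto
  show "?T \<subseteq> {y \<in> hawaiian_set n. f y \<in> U}"
  proof
    fix y assume y: "y \<in> ?T"
    then have yH: "y \<in> hawaiian_set n" using openin_imp_subset[OF W(1)] by auto
    then obtain k where k: "k \<ge> 1" "y \<in> sph_set n k" unfolding hawaiian_set_def by auto
    then show "y \<in> {y \<in> hawaiian_set n. f y \<in> U}"
      using y yH J(2)[of k] by (cases "k \<in> J") auto
  qed
qed

lemma continuous_map_hawaiian_glue: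
  assumes cont: "\<And>k. k \<ge> 1 \<Longrightarrow> continuous_map (top_of_set (sph_set n k)) X f"
    and null: "\<And>U. openin X U \<Longrightarrow> f theta \<in> U \<Longrightarrow>
        finite {k. k \<ge> 1 \<and> \<not> f ` sph_set n k \<subseteq> U}"
  shows "continuous_map (hawaiian n) X f"
proof -
  have img: "f ` hawaiian_set n \<subseteq> topspace X"
    using continuous_map_image_subset_topspace[OF cont] unfolding hawaiian_set_def by fastforce
  have "openin (top_of_set (hawaiian_set n)) {y \<in> hawaiian_set n. f y \<in> U}" if U: "openin X U" for U
  proof (subst openin_subopen, intro ballI)
    fix p assume p: "p \<in> {y \<in> hawaiian_set n. f y \<in> U}"
    note nbhd = hawaiian_preimage_neighbourhood[OF cont U]
    show "\<exists>T. openin (top_of_set (hawaiian_set n)) T \<and> p \<in> T \<and> T \<subseteq> {y \<in> hawaiian_set n. f y \<in> U}"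
    proof (cases "p = theta")
      case True
      then show ?thesis
        using p null[OF U]
        by (intro nbhd[of "hawaiian_set n" p "{k. k \<ge> 1 \<and> \<not> f ` sph_set n k \<subseteq> U}"]) auto
    next
      case False
      obtain k where "k \<ge> 1" "p \<in> sph_set n k" using p unfolding hawaiian_set_def by auto
      then have p0: "p 0 > 0" using sph_set_coord0_pos False by blast
      let ?W = "hawaiian_set n \<inter> {y. p 0 / 2 < y 0}"
      have "open {y::nat\<Rightarrow>real. p 0 / 2 < y 0}"
        by (intro open_Collect_less continuous_intros continuous_on_coordinate)
      then have "openin (top_of_set (hawaiian_set n)) ?W" by blast
      then show ?thesis
        using p p0 finite_sph_set_meeting_halfspace[of "p 0 / 2" n]
        by (intro nbhd[of ?W p "{k. k \<ge> 1 \<and> (\<exists>y\<in>sph_set n k. p 0 / 2 < y 0)}"]) auto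
    qed
  qed
  then show ?thesis
    unfolding continuous_map_def hawaiian_eq_top_of_set using img by auto
qed

lemma hawaiian_map_from_null_convergent:
  assumes fs: "\<And>i. continuous_map (sph n 1) X (fs i)" "\<And>i. fs i theta = x0"
    and nc: "null_convergent (sph n 1) X x0 fs"
  obtains f where "continuous_map (hawaiian n) X f" "f theta = x0"
    "\<And>i x. x \<in> sph_set n 1 \<Longrightarrow> f (shrink (Suc i) x) = fs i x"
proof -
  define radius where "radius y = (SOME k. k \<ge> 1 \<and> y \<in> sph_set n k)" for y
  define f where "f y = fs (radius y - 1) (stretch (radius y) y)" for y
  have stretch_theta: "stretch k theta = theta" for k
    by (simp add: stretch_def theta_def)
  have f_eq: "f y = fs (k - 1) (stretch k y)" if k: "k \<ge> 1" "y \<in> sph_set n k" for k y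
  proof (cases "y = theta")
    case True
    then show ?thesis unfolding f_def using stretch_theta fs(2) by simp
  next
    case False
    have "radius y \<ge> 1 \<and> y \<in> sph_set n (radius y)"
      unfolding radius_def by (rule someI[where P = "\<lambda>k. k \<ge> 1 \<and> y \<in> sph_set n k"]) (use k in blast)
    then have "radius y = k" using sph_set_radius_unique k False by blast
    then show ?thesis unfolding f_def by simp
  qed
  have f_theta: "f theta = x0"
    using f_eq[of 1 theta] theta_in_sph_set stretch_theta fs(2) by simp
  have cont: "continuous_map (top_of_set (sph_set n k)) X f" if k: "k \<ge> 1" for k
  proof (rule continuous_map_eq[OF continuous_map_compose[OF continuous_map_stretch[OF k] fs(1)]])
    fix y assume "y \<in> topspace (top_of_set (sph_set n k))"
    then show "(fs (k - 1) \<circ> stretch k) y = f y" using f_eq[OF k, of y] by simp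
  qed
  have null: "finite {k. k \<ge> 1 \<and> \<not> f ` sph_set n k \<subseteq> U}"
    if U: "openin X U" "f theta \<in> U" for U
  proof -
    define B where "B = {i. \<not> fs i ` topspace (sph n 1) \<subseteq> U}"
    have "{k. k \<ge> 1 \<and> \<not> f ` sph_set n k \<subseteq> U} \<subseteq> Suc ` B"
    proof (rule subsetI, elim CollectE conjE)
      fix k assume k: "k \<ge> 1" "\<not> f ` sph_set n k \<subseteq> U"
      have "f ` sph_set n k \<subseteq> fs (k - 1) ` topspace (sph n 1)"
        using f_eq[OF k(1)] stretch_in_sph_set[OF k(1)] unfolding sph_eq_top_of_set by auto
      then have "k - 1 \<in> B" using k(2) unfolding B_def by blast
      moreover have "k = Suc (k - 1)" using k(1) by simp
      ultimately show "k \<in> Suc ` B" by blast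
    qed
    moreover have "finite B" using nc U f_theta unfolding null_convergent_def B_def by blast
    ultimately show ?thesis by (rule finite_subset[OF _ finite_imageI])
  qed
  show ?thesis
  proof (rule that[OF continuous_map_hawaiian_glue[OF cont null] f_theta])
    fix i x assume "x \<in> sph_set n 1"
    then show "f (shrink (Suc i) x) = fs i x"
      using f_eq[OF _ shrink_in_sph_set] stretch_shrink by simp
  qed
qed

lemma phi_image_subset_L_n: "phi n X x0 ` hawaiian_group n X x0 \<subseteq> L_n n X x0"
proof
  fix s assume "s \<in> phi n X x0 ` hawaiian_group n X x0"
  then obtain f where f: "continuous_map (hawaiian n) X f" "f theta = x0"
    and s: "s = phi n X x0 (based_class (hawaiian n) X x0 f)"
    unfolding hawaiian_group_def by auto
  show "s \<in> L_n n X x0"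
    unfolding L_n_def s phi_based_class[OF f]
  proof (intro CollectI exI[of _ "\<lambda>i. f \<circ> shrink (Suc i)"] conjI allI)
    fix i
    show "continuous_map (sph n 1) X (f \<circ> shrink (Suc i))"
      by (rule continuous_map_compose[OF continuous_map_shrink f(1)]) simp
    show "(f \<circ> shrink (Suc i)) theta = x0"
      using f(2) by (simp add: shrink_theta)
  qed (rule refl null_convergent_restrictions[OF f])+
qed

lemma L_n_subset_phi_image: "L_n n X x0 \<subseteq> phi n X x0 ` hawaiian_group n X x0"
proof
  fix s assume "s \<in> L_n n X x0"
  then obtain fs where fs: "\<And>i. continuous_map (sph n 1) X (fs i)" "\<And>i. fs i theta = x0"
    "\<And>i. s i = based_class (sph n 1) X x0 (fs i)" and nc: "null_convergent (sph n 1) X x0 fs"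
    unfolding L_n_def by blast
  obtain f where f: "continuous_map (hawaiian n) X f" "f theta = x0"
    and restr: "\<And>i x. x \<in> sph_set n 1 \<Longrightarrow> f (shrink (Suc i) x) = fs i x"
    using hawaiian_map_from_null_convergent[OF fs(1,2) nc] by blast
  have "based_class (sph n 1) X x0 (f \<circ> shrink (Suc i)) = s i" for i
    unfolding fs(3)
    using continuous_map_compose[OF continuous_map_shrink f(1)] f(2) fs(2) restr
    by (intro based_class_cong) (auto simp: shrink_theta sph_eq_top_of_set)
  then have "phi n X x0 (based_class (hawaiian n) X x0 f) = s"
    using phi_based_class[OF f] by auto
  moreover have "based_class (hawaiian n) X x0 f \<in> hawaiian_group n X x0"
    unfolding hawaiian_group_def using f by blast
  ultimately show "s \<in> phi n X x0 ` hawaiian_group n X x0" by (metis image_eqI)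
qed

theorem theorem2p7:
  fixes X :: "'a topology" and x0 :: 'a and n :: nat
  assumes "n \<ge> 1" and "x0 \<in> topspace X"
  shows "phi n X x0 ` hawaiian_group n X x0 = L_n n X x0"
  using phi_image_subset_L_n L_n_subset_phi_image by (rule equalityI)

end
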